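(* Suppose that $2\le n_0<\infty$ and that $S$ is submultiplicative on $[1,n_0]$. Then for every $M>0$ there exist $N_0>n_0$ and an extension of $S$ to $[1,N_0]$ which is submultiplicative on $[1,N_0]$ and satisfies $S(N_0)>M$.
   Context: Let $2\le n_0\le\infty$ and let $S$ be a real-valued function on $[1,n_0]$ (on $[1,\infty)$ if $n_0=\infty$). $S$ is called submultiplicative on $[1,n_0]$ if: (a) $S$ is piecewise-linear, continuous, strictly increasing and concave; (b) $S(x)=x$ for $1\le x\le 2$; (c) $S(xy)\le S(x)S(y)$ for all $x,y$ with $1\le x,y,xy\le n_0$. *)

theory Defs
  imports "HOL-Analysis.Analysis"
begin

definition piecewise_linear_on :: "real \<Rightarrow> real \<Rightarrow> (real \<Rightarrow> real) \<Rightarrow> bool" where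
  "piecewise_linear_on a b S \<longleftrightarrow>
     (\<exists>P. finite P \<and> a \<in> P \<and> b \<in> P \<and> P \<subseteq> {a..b} \<and>
        (\<forall>x\<in>P. \<forall>y\<in>P. x < y \<and> {x<..<y} \<inter> P = {} \<longrightarrow>
           (\<exists>m c. \<forall>t\<in>{x..y}. S t = m * t + c)))"

definition submultiplicative_on :: "real \<Rightarrow> (real \<Rightarrow> real) \<Rightarrow> bool" where
  "submultiplicative_on n0 S \<longleftrightarrow>
     piecewise_linear_on 1 n0 S \<and>
     continuous_on {1..n0} S \<and>
     strict_mono_on {1..n0} S \<and>
     concave_on {1..n0} S \<and>
     (\<forall>x\<in>{1..2}. S x = x) \<and>
     (\<forall>x y. 1 \<le> x \<longrightarrow> 1 \<le> y \<longrightarrow> x * y \<le> n0 \<longrightarrow> S (x * y) \<le> S x * S y)"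

end

theory Submission
  imports Defs
begin

text \<open>Near its right end point b, a submultiplicative S is affine with some slope m > 0, and
concavity forces every chord of S to have slope at least m. Continue S beyond b affinely with a
small slope d, chosen so that d b \<le> min m (1/2), up to c = b + 1/d, where the continuation has
gained exactly 1. Concavity survives because d \<le> m. For submultiplicativity of a product x y
beyond b, either one factor lies beyond b, where S b \<ge> 2 and d (x y) \<le> d b + 1 \<le> 3/2 suffice,
or both lie below b: then writing b = x' y with x' \<le> x, the value S x exceeds S x' by at
least m (x - x'), which dominates the increment d (x y - b) \<le> d b (x - x'). Iterating such
extensions raises the value at the end point past any bound.\<close>

lemma concave_on_mono_on_if_const_tail:
  fixes g :: "real \<Rightarrow> real"
  assumes conc: "concave_on {a..b} g" and "p < b" and const: "\<forall>t\<in>{p..b}. g t = c"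
  shows "mono_on {a..b} g"
proof -
  have le_const: "g u \<le> c" if "a \<le> u" "u \<le> b" for u
  proof (rule ccontr)
    assume "\<not> g u \<le> c"
    then have "u < p"
      using const that by force
    have "concave_on {u..b} g"
      using convex_on_subset[OF conc[unfolded concave_on_def], of "{u..b}"] that
      unfolding concave_on_def by auto
    then have "g p \<ge> (g u - g b) / (b - u) * (b - p) + g b"
      using concave_onD_Icc''[of u b g p] \<open>u < p\<close> \<open>p < b\<close> by simp
    moreover have "(g u - g b) / (b - u) * (b - p) > 0"
      using \<open>\<not> g u \<le> c\<close> \<open>u < p\<close> \<open>p < b\<close> const by (intro mult_pos_pos divide_pos_pos) auto
    ultimately show False
      using const \<open>p < b\<close> by auto
  qed
  show ?thesis
  proof (rule mono_onI)
    fix u v assume uv: "u \<in> {a..b}" "v \<in> {a..b}" "u \<le> v"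
    show "g u \<le> g v"
    proof (cases "p \<le> v")
      case True
      then show ?thesis
        using const le_const uv by auto
    next
      case False
      have "concave_on {u..b} g"
        using convex_on_subset[OF conc[unfolded concave_on_def], of "{u..b}"] uv
        unfolding concave_on_def by auto
      then have "min (g u) (g b) \<le> g v"
        using concave_on_ge_min uv by auto
      then show ?thesis
        using const le_const uv \<open>p < b\<close> by auto
    qed
  qed
qed

lemma concave_on_slope_ge_if_affine_tail:
  fixes S :: "real \<Rightarrow> real"
  assumes conc: "concave_on {a..b} S" and "p < b" and affine: "\<forall>t\<in>{p..b}. S t = m * t + c"
    and "a \<le> u" "u \<le> v" "v \<le> b"
  shows "m * (v - u) \<le> S v - S u"
proof -
  have "convex_on {a..b} (\<lambda>t. m * t)"
    by (simp add: convex_on_def algebra_simps)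
  then have "concave_on {a..b} (\<lambda>t. S t - m * t)"
    by (rule concave_on_diff[OF conc])
  moreover have "\<forall>t\<in>{p..b}. S t - m * t = S b - m * b"
    using affine \<open>p < b\<close> by auto
  ultimately have "mono_on {a..b} (\<lambda>t. S t - m * t)"
    using concave_on_mono_on_if_const_tail \<open>p < b\<close> by blast
  then have "S u - m * u \<le> S v - m * v"
    using mono_onD[of "{a..b}" _ u v] assms by auto
  then show ?thesis by (simp add: algebra_simps)
qed

lemma piecewise_linear_on_last_piece:
  assumes "piecewise_linear_on a b S" and "a < b"
  obtains p m c where "a \<le> p" "p < b" "\<forall>t\<in>{p..b}. S t = m * t + c"
proof -
  obtain P where "finite P" "a \<in> P" "b \<in> P" "P \<subseteq> {a..b}"
    and pieces: "\<forall>x\<in>P. \<forall>y\<in>P. x < y \<and> {x<..<y} \<inter> P = {} \<longrightarrow>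
           (\<exists>m c. \<forall>t\<in>{x..y}. S t = m * t + c)"
    using assms(1) unfolding piecewise_linear_on_def by blast
  define p where "p = Max {x\<in>P. x < b}"
  have fin: "finite {x\<in>P. x < b}" and mem: "a \<in> {x\<in>P. x < b}"
    using \<open>finite P\<close> \<open>a \<in> P\<close> \<open>a < b\<close> by auto
  have p: "p \<in> P" "p < b"
    unfolding p_def using Max_in[OF fin] mem by blast+
  have "{p<..<b} \<inter> P = {}"
  proof -
    have "x \<le> p" if "x \<in> P" "x < b" for x
      unfolding p_def using Max_ge[OF fin] that by simp
    then show ?thesis by fastforce
  qed
  then have "\<exists>m c. \<forall>t\<in>{p..b}. S t = m * t + c"
    using pieces p \<open>b \<in> P\<close> by blast
  moreover have "a \<le> p"
    unfolding p_def using Max_ge[OF fin mem] .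
  ultimately show thesis
    using that \<open>p < b\<close> by blast
qed

definition affine_extension :: "real \<Rightarrow> (real \<Rightarrow> real) \<Rightarrow> real \<Rightarrow> real \<Rightarrow> real" where
  "affine_extension b S d t = (if t \<le> b then S t else S b + d * (t - b))"

lemma affine_extension_eq [simp]: "t \<le> b \<Longrightarrow> affine_extension b S d t = S t"
  by (simp add: affine_extension_def)

lemma affine_extension_eq_tail: "b \<le> t \<Longrightarrow> affine_extension b S d t = S b + d * (t - b)"
  by (simp add: affine_extension_def)

lemma affine_extension_eq_min:
  "affine_extension b S d t = (S (min t b) - d * min t b) + d * t"
  by (simp add: affine_extension_def min_def algebra_simps)

lemma piecewise_linear_on_affine_extension:
  assumes "piecewise_linear_on a b S" and "b < c"
  shows "piecewise_linear_on a c (affine_extension b S d)"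
proof -
  obtain P where "finite P" "a \<in> P" "b \<in> P" "P \<subseteq> {a..b}"
    and pieces: "\<forall>x\<in>P. \<forall>y\<in>P. x < y \<and> {x<..<y} \<inter> P = {} \<longrightarrow>
           (\<exists>m k. \<forall>t\<in>{x..y}. S t = m * t + k)"
    using assms(1) unfolding piecewise_linear_on_def by blast
  have extended_pieces: "\<exists>m k. \<forall>t\<in>{x..y}. affine_extension b S d t = m * t + k"
    if "x \<in> insert c P" "y \<in> insert c P" "x < y" and gap: "{x<..<y} \<inter> insert c P = {}" for x y
  proof (cases "y = c")
    case True
    have "x \<le> b"
      using that True \<open>P \<subseteq> {a..b}\<close> by auto
    moreover have "b \<notin> {x<..<y}"
      using gap \<open>b \<in> P\<close> by blast
    ultimately have "x = b"
      using True \<open>b < c\<close> by auto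
    then have "\<forall>t\<in>{x..y}. affine_extension b S d t = d * t + (S b - d * b)"
      by (auto simp: affine_extension_eq_tail algebra_simps)
    then show ?thesis by blast
  next
    case False
    then have "x \<in> P" "y \<in> P" "y \<le> b"
      using that \<open>P \<subseteq> {a..b}\<close> \<open>b < c\<close> by auto
    moreover have "{x<..<y} \<inter> P = {}"
      using gap by blast
    ultimately obtain m k where "\<forall>t\<in>{x..y}. S t = m * t + k"
      using pieces \<open>x < y\<close> by blast
    then show ?thesis
      using \<open>y \<le> b\<close> by auto
  qed
  show ?thesis
    unfolding piecewise_linear_on_def
  proof (intro exI[of _ "insert c P"] conjI ballI impI)
    show "finite (insert c P)" "a \<in> insert c P" "c \<in> insert c P" "insert c P \<subseteq> {a..c}"
      using \<open>finite P\<close> \<open>a \<in> P\<close> \<open>P \<subseteq> {a..b}\<close> \<open>b < c\<close> by auto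
  qed (use extended_pieces in blast)
qed

lemma continuous_on_affine_extension:
  assumes "continuous_on {a..b} S" and "a \<le> b"
  shows "continuous_on {a..c} (affine_extension b S d)"
  unfolding affine_extension_eq_min
  by (intro continuous_intros continuous_on_compose2[OF assms(1)]) (use assms(2) in auto)

lemma strict_mono_on_affine_extension:
  assumes mono: "strict_mono_on {a..b} S" and "0 < d"
  shows "strict_mono_on {a..c} (affine_extension b S d)"
proof (rule strict_mono_onI)
  fix u v assume "u \<in> {a..c}" "v \<in> {a..c}" "u < v"
  consider "v \<le> b" | "u \<le> b" "b < v" | "b < u"
    using \<open>u < v\<close> by linarith
  then show "affine_extension b S d u < affine_extension b S d v"
  proof cases
    case 1
    then show ?thesis
      using strict_mono_onD[OF mono, of u v] \<open>u \<in> {a..c}\<close> \<open>u < v\<close> by auto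
  next
    case 2
    have "S u \<le> S b"
      using strict_mono_onD[OF mono, of u b] \<open>u \<in> {a..c}\<close> 2 by (cases "u = b") auto
    moreover have "0 < d * (v - b)"
      using 2 \<open>0 < d\<close> by simp
    ultimately show ?thesis
      using 2 by (simp add: affine_extension_eq_tail)
  next
    case 3
    then show ?thesis
      using \<open>u < v\<close> \<open>0 < d\<close> by (simp add: affine_extension_eq_tail)
  qed
qed

lemma concave_on_compose_min:
  fixes g :: "real \<Rightarrow> real"
  assumes conc: "concave_on {a..b} g" and mono: "mono_on {a..b} g" and "a \<le> b"
  shows "concave_on {a..c} (\<lambda>t. g (min t b))"
proof (rule concave_on_linorderI)
  fix t x y :: real
  assume t: "0 < t" "t < 1" and "x \<in> {a..c}" "y \<in> {a..c}"
  define z where "z = (1 - t) * x + t * y"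
  define w where "w = (1 - t) * min x b + t * min y b"
  have "w \<le> z"
    unfolding w_def z_def using t by (intro add_mono mult_left_mono) auto
  moreover have "w \<le> (1 - t) * b + t * b"
    unfolding w_def using t by (intro add_mono mult_left_mono) auto
  moreover have "(1 - t) * a + t * a \<le> w"
    unfolding w_def using t \<open>x \<in> {a..c}\<close> \<open>y \<in> {a..c}\<close> \<open>a \<le> b\<close>
    by (intro add_mono mult_left_mono) auto
  ultimately have "w \<in> {a..b}" "min z b \<in> {a..b}" "w \<le> min z b"
    by (auto simp: algebra_simps)
  then have "g w \<le> g (min z b)"
    using mono_onD[OF mono] by blast
  moreover have "(1 - t) * g (min x b) + t * g (min y b) \<le> g w"
    unfolding w_def using concave_onD[OF conc, of t "min x b" "min y b"]
      t \<open>x \<in> {a..c}\<close> \<open>y \<in> {a..c}\<close> \<open>a \<le> b\<close> by simp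
  ultimately show "(1 - t) * g (min x b) + t * g (min y b) \<le> g (min ((1 - t) *\<^sub>R x + t *\<^sub>R y) b)"
    unfolding z_def by simp
qed simp

lemma concave_on_affine_extension:
  assumes conc: "concave_on {a..b} S" and "a \<le> b"
    and slope: "\<And>u v. a \<le> u \<Longrightarrow> u \<le> v \<Longrightarrow> v \<le> b \<Longrightarrow> d * (v - u) \<le> S v - S u"
  shows "concave_on {a..c} (affine_extension b S d)"
proof -
  have "convex_on {a..b} (\<lambda>t. d * t)"
    by (simp add: convex_on_def algebra_simps)
  then have "concave_on {a..b} (\<lambda>t. S t - d * t)"
    by (rule concave_on_diff[OF conc])
  moreover have "mono_on {a..b} (\<lambda>t. S t - d * t)"
    using slope by (intro mono_onI) (auto simp: algebra_simps)
  ultimately have "concave_on {a..c} (\<lambda>t. S (min t b) - d * min t b)"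
    using concave_on_compose_min[of a b _ c] \<open>a \<le> b\<close> by blast
  moreover have "concave_on {a..c} (\<lambda>t. d * t)"
    by (simp add: concave_on_iff algebra_simps)
  ultimately show ?thesis
    unfolding affine_extension_eq_min by (rule concave_on_add)
qed

lemma submultiplicative_onD:
  "submultiplicative_on b S \<Longrightarrow> 1 \<le> x \<Longrightarrow> 1 \<le> y \<Longrightarrow> x * y \<le> b \<Longrightarrow> S (x * y) \<le> S x * S y"
  unfolding submultiplicative_on_def by blast

lemma submultiplicative_on_ge_min2:
  assumes sm: "submultiplicative_on b S" and "1 \<le> x" "x \<le> b"
  shows "min x 2 \<le> S x"
proof (cases "x \<le> 2")
  case True
  then show ?thesis
    using sm \<open>1 \<le> x\<close> unfolding submultiplicative_on_def by simp
next
  case False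
  moreover have "strict_mono_on {1..b} S"
    using sm unfolding submultiplicative_on_def by simp
  ultimately have "S 2 < S x"
    using strict_mono_onD[of "{1..b}" S 2 x] \<open>x \<le> b\<close> by simp
  moreover have "S 2 = 2"
    using sm unfolding submultiplicative_on_def by simp
  ultimately show ?thesis by simp
qed

lemma affine_extension_mult_le_tail:
  assumes sm: "submultiplicative_on b S" and "2 \<le> b" "0 \<le> d" "d * b \<le> 1 / 2" "d * (c - b) \<le> 1"
    and "1 \<le> x" "b \<le> y" "x * y \<le> c"
  shows "affine_extension b S d (x * y) \<le> affine_extension b S d x * affine_extension b S d y"
proof -
  let ?T = "affine_extension b S d"
  have "2 \<le> S b"
    using submultiplicative_on_ge_min2[OF sm, of b] \<open>2 \<le> b\<close> by simp
  have "y \<le> x * y"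
    using \<open>1 \<le> x\<close> \<open>b \<le> y\<close> \<open>2 \<le> b\<close> by (simp add: mult_le_cancel_right1)
  then have T_xy: "?T (x * y) = S b + d * (x * y - b)" and T_y: "?T y = S b + d * (y - b)"
    using \<open>b \<le> y\<close> by (simp_all add: affine_extension_eq_tail)
  show ?thesis
  proof (cases "x \<le> 2")
    case True
    then have "?T x = x"
      using sm \<open>1 \<le> x\<close> \<open>2 \<le> b\<close> unfolding submultiplicative_on_def by simp
    moreover have "0 \<le> (x - 1) * (S b - d * b)"
      using \<open>1 \<le> x\<close> \<open>2 \<le> S b\<close> \<open>d * b \<le> 1 / 2\<close> by simp
    ultimately show ?thesis
      unfolding T_xy T_y by (simp add: algebra_simps)
  next
    case False
    have "2 \<le> ?T x"
    proof (cases "x \<le> b")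
      case True
      then show ?thesis
        using submultiplicative_on_ge_min2[OF sm \<open>1 \<le> x\<close>] False by simp
    next
      case False
      then have "0 \<le> d * (x - b)"
        using \<open>0 \<le> d\<close> by simp
      then show ?thesis
        using False \<open>2 \<le> S b\<close> by (simp add: affine_extension_eq_tail)
    qed
    have "S b - d * b \<le> (?T x - 1) * (S b - d * b)"
      using \<open>2 \<le> ?T x\<close> \<open>2 \<le> S b\<close> \<open>d * b \<le> 1 / 2\<close> by (simp add: mult_le_cancel_right1)
    moreover have "0 \<le> d * y * ?T x"
      using \<open>0 \<le> d\<close> \<open>b \<le> y\<close> \<open>2 \<le> b\<close> \<open>2 \<le> ?T x\<close> by simp
    moreover have "d * (x * y) \<le> d * c"
      using \<open>0 \<le> d\<close> \<open>x * y \<le> c\<close> by (simp add: mult_left_mono)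
    moreover have "?T x * ?T y - ?T (x * y) = (?T x - 1) * (S b - d * b) + d * y * ?T x - d * (x * y)"
      unfolding T_xy T_y by (simp add: algebra_simps)
    ultimately show ?thesis
      using \<open>2 \<le> S b\<close> \<open>d * b \<le> 1 / 2\<close> \<open>d * (c - b) \<le> 1\<close> by (simp add: algebra_simps)
  qed
qed

lemma submultiplicative_on_mult_ge_affine_continuation:
  assumes sm: "submultiplicative_on b S"
    and slope: "\<And>u v. 1 \<le> u \<Longrightarrow> u \<le> v \<Longrightarrow> v \<le> b \<Longrightarrow> m * (v - u) \<le> S v - S u"
    and "0 \<le> d" "d * b \<le> m" and "1 \<le> x" "x \<le> b" "1 \<le> y" "y \<le> b" "b \<le> x * y"
  shows "S b + d * (x * y - b) \<le> S x * S y"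
proof -
  define x' where "x' = b / y"
  have "x' * y = b" "1 \<le> x'" "x' \<le> x"
    unfolding x'_def using \<open>1 \<le> y\<close> \<open>y \<le> b\<close> \<open>b \<le> x * y\<close> by (simp_all add: le_divide_eq divide_le_eq)
  have "S b \<le> S x' * S y"
    using submultiplicative_onD[OF sm \<open>1 \<le> x'\<close> \<open>1 \<le> y\<close>] \<open>x' * y = b\<close> by simp
  have "0 \<le> d * b"
    using \<open>0 \<le> d\<close> \<open>1 \<le> y\<close> \<open>y \<le> b\<close> by simp
  then have "0 \<le> m * (x - x')"
    using \<open>d * b \<le> m\<close> \<open>x' \<le> x\<close> by simp
  moreover have "m * (x - x') \<le> S x - S x'"
    using slope \<open>1 \<le> x'\<close> \<open>x' \<le> x\<close> \<open>x \<le> b\<close> by simp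
  moreover have "1 \<le> S y"
    using submultiplicative_on_ge_min2[OF sm \<open>1 \<le> y\<close> \<open>y \<le> b\<close>] \<open>1 \<le> y\<close> by simp
  ultimately have "(S x - S x') * 1 \<le> (S x - S x') * S y"
    by (intro mult_left_mono) auto
  then have "m * (x - x') \<le> (S x - S x') * S y"
    using \<open>m * (x - x') \<le> S x - S x'\<close> by simp
  have "d * (x * y - b) = d * y * (x - x')"
    using \<open>x' * y = b\<close> by (simp add: algebra_simps)
  also have "\<dots> \<le> d * b * (x - x')"
    using \<open>0 \<le> d\<close> \<open>y \<le> b\<close> \<open>x' \<le> x\<close> by (intro mult_right_mono mult_left_mono) auto
  also have "\<dots> \<le> m * (x - x')"
    using \<open>d * b \<le> m\<close> \<open>x' \<le> x\<close> by (intro mult_right_mono) auto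
  finally show ?thesis
    using \<open>S b \<le> S x' * S y\<close> \<open>m * (x - x') \<le> (S x - S x') * S y\<close> by (simp add: algebra_simps)
qed

lemma affine_extension_mult_le:
  assumes sm: "submultiplicative_on b S" and "2 \<le> b"
    and slope: "\<And>u v. 1 \<le> u \<Longrightarrow> u \<le> v \<Longrightarrow> v \<le> b \<Longrightarrow> m * (v - u) \<le> S v - S u"
    and "0 \<le> d" "d * b \<le> m" "d * b \<le> 1 / 2" "d * (c - b) \<le> 1"
    and "1 \<le> x" "1 \<le> y" "x * y \<le> c"
  shows "affine_extension b S d (x * y) \<le> affine_extension b S d x * affine_extension b S d y"
proof -
  have "x \<le> x * y" "y \<le> x * y"
    using \<open>1 \<le> x\<close> \<open>1 \<le> y\<close> by (simp_all add: mult_le_cancel_left1 mult_le_cancel_right1)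
  consider "x * y \<le> b" | "b \<le> y" | "b \<le> x" | "x \<le> b" "y \<le> b" "b \<le> x * y"
    by linarith
  then show ?thesis
  proof cases
    case 1
    then show ?thesis
      using submultiplicative_onD[OF sm \<open>1 \<le> x\<close> \<open>1 \<le> y\<close>] \<open>x \<le> x * y\<close> \<open>y \<le> x * y\<close> by simp
  next
    case 2
    then show ?thesis
      using affine_extension_mult_le_tail assms by blast
  next
    case 3
    then show ?thesis
      using affine_extension_mult_le_tail[of b S d c y x] assms by (simp add: mult.commute)
  next
    case 4
    then show ?thesis
      using submultiplicative_on_mult_ge_affine_continuation[OF sm slope \<open>0 \<le> d\<close> \<open>d * b \<le> m\<close>] \<open>1 \<le> x\<close> \<open>1 \<le> y\<close>
      by (simp add: affine_extension_eq_tail)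
  qed
qed

lemma submultiplicative_on_affine_extension:
  assumes sm: "submultiplicative_on b S" and "2 \<le> b"
    and slope: "\<And>u v. 1 \<le> u \<Longrightarrow> u \<le> v \<Longrightarrow> v \<le> b \<Longrightarrow> m * (v - u) \<le> S v - S u"
    and "0 < d" "d * b \<le> m" "d * b \<le> 1 / 2" "b < c" "d * (c - b) \<le> 1"
  shows "submultiplicative_on c (affine_extension b S d)"
  unfolding submultiplicative_on_def
proof (intro conjI allI impI)
  have pl: "piecewise_linear_on 1 b S" and cont: "continuous_on {1..b} S"
    and mono: "strict_mono_on {1..b} S" and conc: "concave_on {1..b} S"
    and id: "\<forall>x\<in>{1..2}. S x = x"
    using sm unfolding submultiplicative_on_def by auto
  have "d \<le> d * b"
    using \<open>0 < d\<close> \<open>2 \<le> b\<close> by simp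
  then have slope_d: "d * (v - u) \<le> S v - S u" if "1 \<le> u" "u \<le> v" "v \<le> b" for u v
    using slope[OF that] mult_right_mono[of d m "v - u"] \<open>d * b \<le> m\<close> that by linarith
  show "piecewise_linear_on 1 c (affine_extension b S d)"
    using piecewise_linear_on_affine_extension[OF pl \<open>b < c\<close>] .
  show "continuous_on {1..c} (affine_extension b S d)"
    using continuous_on_affine_extension[OF cont] \<open>2 \<le> b\<close> by simp
  show "strict_mono_on {1..c} (affine_extension b S d)"
    using strict_mono_on_affine_extension[OF mono \<open>0 < d\<close>] .
  show "concave_on {1..c} (affine_extension b S d)"
    using concave_on_affine_extension[OF conc _ slope_d] \<open>2 \<le> b\<close> by simp
  show "\<forall>x\<in>{1..2}. affine_extension b S d x = x"
    using id \<open>2 \<le> b\<close> by simp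
next
  fix x y :: real
  assume "1 \<le> x" "1 \<le> y" "x * y \<le> c"
  with \<open>0 < d\<close> \<open>d * (c - b) \<le> 1\<close>
  show "affine_extension b S d (x * y) \<le> affine_extension b S d x * affine_extension b S d y"
    by (intro affine_extension_mult_le[OF sm \<open>2 \<le> b\<close> slope _ \<open>d * b \<le> m\<close> \<open>d * b \<le> 1 / 2\<close>]) auto
qed

lemma submultiplicative_on_extend:
  assumes "2 \<le> b" and sm: "submultiplicative_on b S"
  obtains c T where "b < c" "\<forall>x\<in>{1..b}. T x = S x" "submultiplicative_on c T" "T c = S b + 1"
proof -
  have pl: "piecewise_linear_on 1 b S" and mono: "strict_mono_on {1..b} S"
    and conc: "concave_on {1..b} S"
    using sm unfolding submultiplicative_on_def by auto
  obtain p m k where "1 \<le> p" "p < b" and last_piece: "\<forall>t\<in>{p..b}. S t = m * t + k"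
    using piecewise_linear_on_last_piece[OF pl] \<open>2 \<le> b\<close> by auto
  have slope: "m * (v - u) \<le> S v - S u" if "1 \<le> u" "u \<le> v" "v \<le> b" for u v
    using concave_on_slope_ge_if_affine_tail[OF conc \<open>p < b\<close> last_piece] that by simp
  have "S p < S b"
    using strict_mono_onD[OF mono] \<open>1 \<le> p\<close> \<open>p < b\<close> by simp
  then have "0 < m * (b - p)"
    using last_piece \<open>1 \<le> p\<close> \<open>p < b\<close> by (simp add: algebra_simps)
  then have "0 < m"
    using \<open>p < b\<close> by (simp add: zero_less_mult_iff)
  define d where "d = min m (1 / 2) / b"
  define c where "c = b + 1 / d"
  have "0 < d" "d * b \<le> m" "d * b \<le> 1 / 2"
    unfolding d_def using \<open>0 < m\<close> \<open>2 \<le> b\<close> by auto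
  then have "b < c" "d * (c - b) = 1"
    unfolding c_def by simp_all
  then show thesis
    using that[of c "affine_extension b S d"] \<open>0 < d\<close> \<open>d * b \<le> m\<close> \<open>d * b \<le> 1 / 2\<close>
      submultiplicative_on_affine_extension[OF sm \<open>2 \<le> b\<close> slope]
    by (simp add: affine_extension_eq_tail)
qed

lemma submultiplicative_on_extend_iterate:
  assumes "2 \<le> n0" and "submultiplicative_on n0 S"
  shows "\<exists>N T. n0 \<le> N \<and> (\<forall>x\<in>{1..n0}. T x = S x) \<and> submultiplicative_on N T \<and> S n0 + real k \<le> T N"
proof (induction k)
  case 0
  show ?case
    using assms by auto
next
  case (Suc k)
  then obtain N T where "n0 \<le> N" "\<forall>x\<in>{1..n0}. T x = S x" "submultiplicative_on N T" "S n0 + real k \<le> T N"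
    by blast
  moreover obtain N' T' where "N < N'" "\<forall>x\<in>{1..N}. T' x = T x" "submultiplicative_on N' T'" "T' N' = T N + 1"
    using submultiplicative_on_extend[OF _ \<open>submultiplicative_on N T\<close>] \<open>2 \<le> n0\<close> \<open>n0 \<le> N\<close> by auto
  ultimately show ?case
    by (intro exI[of _ N'] exI[of _ T']) auto
qed

theorem lemma2p5:
  fixes n0 :: real and S :: "real \<Rightarrow> real"
  assumes "2 \<le> n0" and "submultiplicative_on n0 S"
  shows "\<forall>M>0. \<exists>N0 T. N0 > n0 \<and> (\<forall>x\<in>{1..n0}. T x = S x) \<and>
           submultiplicative_on N0 T \<and> T N0 > M"
proof (intro allI impI)
  fix M :: real
  assume "M > 0"
  obtain k :: nat where "M < real k"
    using reals_Archimedean2 by blast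
  then obtain N T where "n0 \<le> N" "\<forall>x\<in>{1..n0}. T x = S x" "submultiplicative_on N T" "S n0 + real k \<le> T N"
    using submultiplicative_on_extend_iterate[OF assms] by blast
  moreover have "2 \<le> S n0"
    using submultiplicative_on_ge_min2[OF assms(2), of n0] \<open>2 \<le> n0\<close> by simp
  moreover have "N \<noteq> n0"
    using \<open>\<forall>x\<in>{1..n0}. T x = S x\<close> \<open>S n0 + real k \<le> T N\<close> \<open>M > 0\<close> \<open>M < real k\<close> \<open>2 \<le> n0\<close> by auto
  ultimately show "\<exists>N0 T. N0 > n0 \<and> (\<forall>x\<in>{1..n0}. T x = S x) \<and> submultiplicative_on N0 T \<and> T N0 > M"
    using \<open>M < real k\<close> by (intro exI[of _ N] exI[of _ T]) auto
qed

end
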